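(* Let $K$ be a finite simplicial complex, $L$ a full subcomplex, $W$ the union of the simplices of $K$ not meeting $L$, $p$ a positive even integer, $T\in C^p(K,W;\mathbb Q)$ a cocycle, $K^*$ a subcomplex of $K$ and $L^*=K^*\cap L$. For a good ordering $\mathcal O$ of $K$ with respect to $L$, the chain map $\alpha\mapsto T\overset{\mathcal O}{\cap}\alpha$ induces a homomorphism $H_{p+q}(K,K^*;\mathbb Q)\to H_q(L,L^*;\mathbb Q)$. This homomorphism is independent of the choice of the good ordering $\mathcal O$.
   Context: A subcomplex $L$ of $K$ is full if every simplex of $K$ all of whose vertices lie in $L$ belongs to $L$. $C^p(K,W;\mathbb Q)$ consists of simplicial $p$-cochains vanishing on simplices contained in $W$. An ordering of $K$ is a partial order on the vertices whose restriction to the vertices of each simplex is a total order; it is good with respect to $L$ if whenever $v$ is a vertex of $L$ and $w\ge v$, then $w$ is a vertex of $L$. For $\alpha=[v_0,\dots,v_k]$ with $v_0<\dots<v_k$, $T\overset{\mathcal O}{\cap}\alpha=T([v_0,\dots,v_p])[v_p,\dots,v_k]$, extended linearly. *)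

theory Defs
  imports Complex_Main
begin

text \<open>The linear order
of the vertex type only serves to fix a reference orientation of each simplex,
so that oriented chains and cochains can be represented as functions on
(unoriented) simplices.\<close>

definition simplicial_complex :: "'v set set \<Rightarrow> bool" where
  "simplicial_complex K \<longleftrightarrow> finite K \<and> (\<forall>\<sigma>\<in>K. finite \<sigma> \<and> \<sigma> \<noteq> {}) \<and>
     (\<forall>\<sigma>\<in>K. \<forall>\<tau>. \<tau> \<subseteq> \<sigma> \<and> \<tau> \<noteq> {} \<longrightarrow> \<tau> \<in> K)"

definition subcomplex :: "'v set set \<Rightarrow> 'v set set \<Rightarrow> bool" where
  "subcomplex L K \<longleftrightarrow> simplicial_complex L \<and> L \<subseteq> K"

definition full_subcomplex :: "'v set set \<Rightarrow> 'v set set \<Rightarrow> bool" where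
  "full_subcomplex L K \<longleftrightarrow> subcomplex L K \<and> (\<forall>\<sigma>\<in>K. \<sigma> \<subseteq> \<Union>L \<longrightarrow> \<sigma> \<in> L)"

text \<open>W: the subcomplex formed by the simplices of K not meeting L (a simplex
lies in the union of these iff it is one of them).\<close>
definition Wcomplex :: "'v set set \<Rightarrow> 'v set set \<Rightarrow> 'v set set" where
  "Wcomplex K L = {\<sigma>\<in>K. \<sigma> \<inter> \<Union>L = {}}"

text \<open>Rational k-chains of K: coefficient functions on k-simplices of K,
with respect to the reference orientation (increasing vertex order).\<close>
definition chain :: "'v set set \<Rightarrow> nat \<Rightarrow> ('v set \<Rightarrow> rat) \<Rightarrow> bool" where
  "chain K k c \<longleftrightarrow> (\<forall>\<sigma>. c \<sigma> \<noteq> 0 \<longrightarrow> \<sigma> \<in> K \<and> card \<sigma> = Suc k)"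

definition incid :: "'v::linorder set \<Rightarrow> 'v set \<Rightarrow> rat" where
  "incid \<sigma> \<tau> = (if \<tau> \<subseteq> \<sigma> \<and> card \<sigma> = Suc (card \<tau>) \<and> \<tau> \<noteq> {}
      then (-1) ^ card {w\<in>\<sigma>. w < the_elem (\<sigma> - \<tau>)} else 0)"

definition bd :: "'v::linorder set set \<Rightarrow> ('v set \<Rightarrow> rat) \<Rightarrow> ('v set \<Rightarrow> rat)" where
  "bd K c = (\<lambda>\<tau>. \<Sum>\<sigma>\<in>K. c \<sigma> * incid \<sigma> \<tau>)"

definition rel_cycle :: "'v::linorder set set \<Rightarrow> 'v set set \<Rightarrow> nat \<Rightarrow> ('v set \<Rightarrow> rat) \<Rightarrow> bool" where
  "rel_cycle K K0 n c \<longleftrightarrow> chain K n c \<and> chain K0 (n - 1) (bd K c)"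

definition rel_boundary :: "'v::linorder set set \<Rightarrow> 'v set set \<Rightarrow> nat \<Rightarrow> ('v set \<Rightarrow> rat) \<Rightarrow> bool" where
  "rel_boundary K K0 n c \<longleftrightarrow>
     (\<exists>d e. chain K (Suc n) d \<and> chain K0 n e \<and> c = (\<lambda>\<tau>. bd K d \<tau> + e \<tau>))"

definition rel_cochain :: "'v set set \<Rightarrow> 'v set set \<Rightarrow> nat \<Rightarrow> ('v set \<Rightarrow> rat) \<Rightarrow> bool" where
  "rel_cochain K W p T \<longleftrightarrow> (\<forall>\<sigma>. T \<sigma> \<noteq> 0 \<longrightarrow> \<sigma> \<in> K \<and> card \<sigma> = Suc p \<and> \<sigma> \<notin> W)"

definition cocycle :: "'v::linorder set set \<Rightarrow> nat \<Rightarrow> ('v set \<Rightarrow> rat) \<Rightarrow> bool" where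
  "cocycle K p T \<longleftrightarrow> (\<forall>\<tau>\<in>K. card \<tau> = p + 2 \<longrightarrow> (\<Sum>\<sigma>\<in>K. incid \<tau> \<sigma> * T \<sigma>) = 0)"

definition ordering :: "'v set set \<Rightarrow> ('v \<Rightarrow> 'v \<Rightarrow> bool) \<Rightarrow> bool" where
  "ordering K R \<longleftrightarrow>
     (\<forall>x\<in>\<Union>K. R x x) \<and>
     (\<forall>x\<in>\<Union>K. \<forall>y\<in>\<Union>K. R x y \<and> R y x \<longrightarrow> x = y) \<and>
     (\<forall>x\<in>\<Union>K. \<forall>y\<in>\<Union>K. \<forall>z\<in>\<Union>K. R x y \<and> R y z \<longrightarrow> R x z) \<and>
     (\<forall>\<sigma>\<in>K. \<forall>x\<in>\<sigma>. \<forall>y\<in>\<sigma>. R x y \<or> R y x)"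

definition good_ordering :: "'v set set \<Rightarrow> 'v set set \<Rightarrow> ('v \<Rightarrow> 'v \<Rightarrow> bool) \<Rightarrow> bool" where
  "good_ordering K L R \<longleftrightarrow> ordering K R \<and>
     (\<forall>v\<in>\<Union>L. \<forall>w\<in>\<Union>K. R v w \<longrightarrow> w \<in> \<Union>L)"

definition olist :: "('v \<Rightarrow> 'v \<Rightarrow> bool) \<Rightarrow> 'v set \<Rightarrow> 'v list" where
  "olist R \<sigma> = (THE xs. set xs = \<sigma> \<and> distinct xs \<and> sorted_wrt R xs)"

text \<open>Number of inversions of a vertex list relative to the reference order;
the oriented simplex [xs] equals (-1)^inv xs times the reference-oriented one.\<close>
definition inv_count :: "'v::linorder list \<Rightarrow> nat" where
  "inv_count xs = card {(i, j). i < j \<and> j < length xs \<and> xs ! j < xs ! i}"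

definition osimp :: "'v::linorder list \<Rightarrow> ('v set \<Rightarrow> rat)" where
  "osimp xs = (\<lambda>\<tau>. if \<tau> = set xs then (-1) ^ inv_count xs else 0)"

definition cochain_eval :: "('v set \<Rightarrow> rat) \<Rightarrow> 'v::linorder list \<Rightarrow> rat" where
  "cochain_eval T xs = (-1) ^ inv_count xs * T (set xs)"

text \<open>T cap_O on the reference-oriented simplex \<sigma>: writing \<sigma> = \<epsilon> [v0,...,vk]
with v0 < ... < vk in R, the result is \<epsilon> T([v0..vp]) [vp..vk].\<close>
definition cap_simplex :: "nat \<Rightarrow> ('v \<Rightarrow> 'v \<Rightarrow> bool) \<Rightarrow> ('v set \<Rightarrow> rat) \<Rightarrow> 'v::linorder set \<Rightarrow> ('v set \<Rightarrow> rat)" where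
  "cap_simplex p R T \<sigma> = (let xs = olist R \<sigma> in
     if p < length xs then
       (\<lambda>\<tau>. (-1) ^ inv_count xs * cochain_eval T (take (Suc p) xs) * osimp (drop p xs) \<tau>)
     else (\<lambda>_. 0))"

definition cap :: "'v::linorder set set \<Rightarrow> nat \<Rightarrow> ('v \<Rightarrow> 'v \<Rightarrow> bool) \<Rightarrow> ('v set \<Rightarrow> rat) \<Rightarrow> ('v set \<Rightarrow> rat) \<Rightarrow> ('v set \<Rightarrow> rat)" where
  "cap K p R T c = (\<lambda>\<tau>. \<Sum>\<sigma>\<in>K. c \<sigma> * cap_simplex p R T \<sigma> \<tau>)"

end

theory Submission
  imports Defs
begin

text \<open>For a cocycle T of even degree p the cap product is a chain map simplex by simplex:
  in the boundary of an ordered simplex [v0, ..., vk], the faces omitting one of v0, ..., vp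
  add up, by the cocycle condition on [v0, ..., v(p+1)], to T([v0, ..., vp]) [v(p+1), ..., vk],
  and the remaining faces give T([v0, ..., vp]) times the boundary of [vp, ..., vk].
  Since T vanishes on simplices missing L and a good ordering puts the vertices of L last,
  T \<inter> \<sigma> is carried by L, so cycles and boundaries of (K, K*) go to cycles and boundaries
  of (L, L*). For two good orderings, both cap products of \<sigma> are carried by the full simplex
  on the vertices of \<sigma> in L, which is a cone; acyclic carriers then produce a chain homotopy
  between the two cap maps, carried by L, so they induce the same map in homology.\<close>

lemma inv_count_Nil [simp]: "inv_count [] = 0"
  by (simp add: inv_count_def)

lemma inv_count_Cons: "inv_count (x # xs) = length (filter (\<lambda>y. y < x) xs) + inv_count xs"
proof -
  let ?S = "\<lambda>xs::'a list. {(i, j). i < j \<and> j < length xs \<and> xs ! j < xs ! i}"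
  have fin: "finite (?S ys)" for ys :: "'a list"
    by (rule finite_subset[of _ "{..<length ys} \<times> {..<length ys}"]) auto
  have split: "?S (x # xs) = (\<lambda>j. (0, Suc j)) ` {j. j < length xs \<and> xs ! j < x}
      \<union> (\<lambda>(i, j). (Suc i, Suc j)) ` ?S xs"
  proof (rule set_eqI, clarify)
    fix i j
    show "(i, j) \<in> ?S (x # xs) \<longleftrightarrow> (i, j) \<in> (\<lambda>j. (0, Suc j)) ` {j. j < length xs \<and> xs ! j < x}
        \<union> (\<lambda>(i, j). (Suc i, Suc j)) ` ?S xs"
      by (cases i; cases j) (auto simp: image_iff)
  qed
  have "card (?S (x # xs)) = card {j. j < length xs \<and> xs ! j < x} + card (?S xs)"
    unfolding split using fin
    by (subst card_Un_disjoint) (auto simp: card_image inj_on_def)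
  then show ?thesis
    unfolding inv_count_def by (simp add: length_filter_conv_card)
qed

lemma inv_count_append_Cons:
  "inv_count (ys @ x # zs) =
     inv_count (ys @ zs) + length (filter (\<lambda>y. x < y) ys) + length (filter (\<lambda>z. z < x) zs)"
  by (induction ys) (auto simp: inv_count_Cons)

lemma inv_count_sorted:
  assumes "sorted xs" shows "inv_count xs = 0"
proof -
  have "\<not> xs ! j < xs ! i" if "i < j" "j < length xs" for i j
    using sorted_nth_mono[OF assms, of i j] that by simp
  then have "{(i, j). i < j \<and> j < length xs \<and> xs ! j < xs ! i} = {}" by blast
  then show ?thesis unfolding inv_count_def by (metis card.empty)
qed

lemma length_filter_less_plus_greater:
  fixes x :: "'a::linorder"
  assumes "x \<notin> set ys"
  shows "length (filter (\<lambda>y. y < x) ys) + length (filter (\<lambda>y. x < y) ys) = length ys"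
proof -
  have "filter (\<lambda>y. x < y) ys = filter (\<lambda>y. \<not> y < x) ys"
    using assms by (intro filter_cong refl) (auto simp: not_less le_less)
  then show ?thesis using sum_length_filter_compl[of "\<lambda>y. y < x" ys] by simp
qed

definition del_nth :: "nat \<Rightarrow> 'a list \<Rightarrow> 'a list" where
  "del_nth i xs = take i xs @ drop (Suc i) xs"

lemma length_del_nth [simp]: "i < length xs \<Longrightarrow> length (del_nth i xs) = length xs - 1"
  by (simp add: del_nth_def)

lemma del_nth_Cons_0 [simp]: "del_nth 0 (x # xs) = xs"
  by (simp add: del_nth_def)

lemma del_nth_Cons_Suc [simp]: "del_nth (Suc i) (x # xs) = x # del_nth i xs"
  by (simp add: del_nth_def)

lemma set_del_nth:
  assumes "distinct xs" "i < length xs"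
  shows "set (del_nth i xs) = set xs - {xs ! i}"
proof -
  have xs: "xs = take i xs @ xs ! i # drop (Suc i) xs"
    using assms(2) by (simp add: id_take_nth_drop)
  then have "distinct (take i xs @ xs ! i # drop (Suc i) xs)" using assms(1) by simp
  then show ?thesis unfolding del_nth_def by (subst (2) xs) auto
qed

lemma distinct_del_nth: "distinct xs \<Longrightarrow> distinct (del_nth i xs)"
  unfolding del_nth_def using set_take_disj_set_drop_if_distinct[of xs i "Suc i"] by simp

lemma sorted_wrt_del_nth:
  assumes "sorted_wrt R xs" shows "sorted_wrt R (del_nth i xs)"
proof -
  have "sorted_wrt R (take i xs @ drop i xs)" using assms by simp
  moreover have "set (drop (Suc i) xs) \<subseteq> set (drop i xs)"
    by (rule set_drop_subset_set_drop) simp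
  ultimately show ?thesis
    unfolding del_nth_def sorted_wrt_append using assms by (auto simp: sorted_wrt_drop)
qed

lemma del_nth_nonempty:
  assumes "i < length xs" "2 \<le> length xs" shows "del_nth i xs \<noteq> []"
proof
  assume "del_nth i xs = []"
  then have "length (del_nth i xs) = 0" by simp
  with assms show False by simp
qed

lemma inj_on_set_del_nth:
  assumes "distinct xs" shows "inj_on (\<lambda>i. set (del_nth i xs)) {..<length xs}"
proof (rule inj_onI)
  fix i j assume i: "i \<in> {..<length xs}" and j: "j \<in> {..<length xs}"
    and eq: "set (del_nth i xs) = set (del_nth j xs)"
  have "xs ! i \<notin> set (del_nth j xs)"
    using assms i by (simp add: eq[symmetric] set_del_nth)
  then have "xs ! i = xs ! j" using assms i j by (simp add: set_del_nth)
  then show "i = j" using assms i j by (simp add: nth_eq_iff_index_eq)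
qed

definition num_below :: "'v::linorder \<Rightarrow> 'v set \<Rightarrow> nat" where
  "num_below x s = card {w\<in>s. w < x}"

lemma num_below_Diff_singleton:
  assumes "finite s" "a \<in> s"
  shows "num_below x s = num_below x (s - {a}) + (if a < x then 1 else 0)"
proof -
  have "{w\<in>s - {a}. w < x} = {w\<in>s. w < x} - {a}" by auto
  moreover have "card {w\<in>s. w < x} = Suc (card ({w\<in>s. w < x} - {a}))" if "a < x"
    using card_Suc_Diff1[of "{w\<in>s. w < x}" a] assms that by simp
  ultimately show ?thesis unfolding num_below_def by auto
qed

lemma num_below_insert_self [simp]: "num_below v (insert v s) = num_below v s"
  unfolding num_below_def by (rule arg_cong[where f = card]) auto

lemma num_below_set: "distinct xs \<Longrightarrow> num_below x (set xs) = length (filter (\<lambda>w. w < x) xs)"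
  unfolding num_below_def by (metis distinct_card distinct_filter set_filter)

lemma incid_Diff_singleton:
  assumes "finite s" "x \<in> s" "s - {x} \<noteq> {}"
  shows "incid s (s - {x}) = (-1) ^ num_below x s"
proof -
  have "s - {x} \<subseteq> s \<and> card s = Suc (card (s - {x})) \<and> s - {x} \<noteq> {}"
    using card_Suc_Diff1[OF assms(1,2)] assms(3) by auto
  then have "incid s (s - {x}) = (-1) ^ card {w\<in>s. w < the_elem (s - (s - {x}))}"
    unfolding incid_def by (rule if_P)
  also have "s - (s - {x}) = {x}" using assms(2) by auto
  finally show ?thesis by (simp add: num_below_def)
qed

lemma incid_nonzeroE:
  assumes "incid s t \<noteq> 0" "finite s"
  obtains x where "x \<in> s" "t = s - {x}" "t \<noteq> {}"
proof -
  have t: "t \<subseteq> s" "card s = Suc (card t)" "t \<noteq> {}"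
    using assms(1) unfolding incid_def by (auto split: if_splits)
  then have "card (s - t) = 1" using assms(2) by (simp add: card_Diff_subset finite_subset)
  then obtain x where "s - t = {x}" by (auto simp: card_Suc_eq)
  with t that show ?thesis by blast
qed

lemma card_incid_nonzero: "incid s t \<noteq> 0 \<Longrightarrow> t \<subseteq> s \<and> card s = Suc (card t)"
  unfolding incid_def by (auto split: if_splits)

lemma incid_singleton [simp]: "incid {x} \<tau> = 0"
  unfolding incid_def by (auto simp: subset_singleton_iff)

lemma inv_count_del_nth:
  fixes xs :: "'v::linorder list"
  assumes d: "distinct xs" and k: "k < length xs"
  shows "inv_count xs + k = inv_count (del_nth k xs) + num_below (xs ! k) (set xs) +
    2 * length (filter (\<lambda>w. xs ! k < w) (take k xs))"
proof -
  define ys zs x where "ys = take k xs" and "zs = drop (Suc k) xs" and "x = xs ! k"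
  have xs: "xs = ys @ x # zs" and del: "del_nth k xs = ys @ zs"
    unfolding ys_def zs_def x_def del_nth_def using k by (simp_all add: id_take_nth_drop)
  have "length ys = k" using k by (simp add: ys_def)
  moreover have "x \<notin> set ys" using d by (simp add: xs)
  ultimately have "length (filter (\<lambda>w. w < x) ys) + length (filter (\<lambda>w. x < w) ys) = k"
    using length_filter_less_plus_greater by blast
  moreover have "num_below x (set xs) = length (filter (\<lambda>w. w < x) ys) + length (filter (\<lambda>w. w < x) zs)"
    using num_below_set[OF d, of x] by (simp add: xs)
  moreover have "inv_count xs =
      inv_count (ys @ zs) + length (filter (\<lambda>w. x < w) ys) + length (filter (\<lambda>w. w < x) zs)"
    by (subst xs) (rule inv_count_append_Cons)
  ultimately show ?thesis unfolding x_def[symmetric] ys_def[symmetric] del by simp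
qed

lemma incid_del_nth:
  fixes xs :: "'v::linorder list"
  assumes d: "distinct xs" and i: "i < length xs" and l: "2 \<le> length xs"
  shows "incid (set xs) (set (del_nth i xs)) = (-1) ^ (inv_count xs + i + inv_count (del_nth i xs))"
proof -
  have del_set: "set (del_nth i xs) = set xs - {xs ! i}" using set_del_nth[OF d i] .
  moreover have "set xs - {xs ! i} \<noteq> {}"
    using del_nth_nonempty[OF i l] by (simp flip: del_set)
  ultimately have "incid (set xs) (set (del_nth i xs)) = (-1) ^ num_below (xs ! i) (set xs)"
    using i by (simp add: incid_Diff_singleton)
  then show ?thesis
    using inv_count_del_nth[OF d i] by (simp add: power_add power_mult)
qed

subsection \<open>Boundaries of oriented simplices\<close>

lemma face_in_complex: "simplicial_complex K \<Longrightarrow> \<sigma> \<in> K \<Longrightarrow> \<tau> \<subseteq> \<sigma> \<Longrightarrow> \<tau> \<noteq> {} \<Longrightarrow> \<tau> \<in> K"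
  unfolding simplicial_complex_def by blast

lemma finite_simplex: "simplicial_complex K \<Longrightarrow> \<sigma> \<in> K \<Longrightarrow> finite \<sigma>"
  unfolding simplicial_complex_def by blast

lemma simplex_nonempty: "simplicial_complex K \<Longrightarrow> \<sigma> \<in> K \<Longrightarrow> \<sigma> \<noteq> {}"
  unfolding simplicial_complex_def by blast

lemma finite_complex: "simplicial_complex K \<Longrightarrow> finite K"
  unfolding simplicial_complex_def by blast

lemma full_subcomplexD: "full_subcomplex L K \<Longrightarrow> \<sigma> \<in> K \<Longrightarrow> \<sigma> \<subseteq> \<Union>L \<Longrightarrow> \<sigma> \<in> L"
  unfolding full_subcomplex_def by blast

lemma full_subcomplex_subset: "full_subcomplex L K \<Longrightarrow> L \<subseteq> K"
  unfolding full_subcomplex_def subcomplex_def by blast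

lemma del_nth_face:
  assumes K: "simplicial_complex K" and xs: "set xs \<in> K" "distinct xs"
    and i: "i < length xs" and l: "2 \<le> length xs"
  shows "set (del_nth i xs) \<in> K"
proof (rule face_in_complex[OF K xs(1)])
  show "set (del_nth i xs) \<subseteq> set xs" using set_del_nth[OF xs(2) i] by auto
  show "set (del_nth i xs) \<noteq> {}" using del_nth_nonempty[OF i l] by simp
qed

lemma sum_incid_del_nth:
  fixes xs :: "'v::linorder list"
  assumes K: "simplicial_complex K" and d: "distinct xs" and xs: "set xs \<in> K" and l: "2 \<le> length xs"
  shows "(\<Sum>\<rho>\<in>K. incid (set xs) \<rho> * G \<rho>) =
     (\<Sum>i<length xs. (-1) ^ (inv_count xs + i + inv_count (del_nth i xs)) * G (set (del_nth i xs)))"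
proof -
  let ?face = "\<lambda>i. set (del_nth i xs)"
  have faces: "?face ` {..<length xs} \<subseteq> K" using del_nth_face[OF K xs d _ l] by auto
  have "incid (set xs) \<rho> = 0" if "\<rho> \<in> K - ?face ` {..<length xs}" for \<rho>
  proof (rule ccontr)
    assume "incid (set xs) \<rho> \<noteq> 0"
    then obtain x where "x \<in> set xs" "\<rho> = set xs - {x}" by (auto elim: incid_nonzeroE)
    then obtain i where "i < length xs" "\<rho> = ?face i"
      using set_del_nth[OF d] by (metis in_set_conv_nth)
    with that show False by auto
  qed
  then have "(\<Sum>\<rho>\<in>K. incid (set xs) \<rho> * G \<rho>) = (\<Sum>\<rho>\<in>?face ` {..<length xs}. incid (set xs) \<rho> * G \<rho>)"
    using faces finite_complex[OF K] by (intro sum.mono_neutral_right) auto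
  also have "\<dots> = (\<Sum>i<length xs. incid (set xs) (?face i) * G (?face i))"
    by (simp add: sum.reindex[OF inj_on_set_del_nth[OF d]])
  finally show ?thesis by (simp add: incid_del_nth[OF d _ l])
qed

lemma bd_cmult: "bd K (\<lambda>\<tau>. c * f \<tau>) \<tau> = c * bd K f \<tau>"
  by (simp add: bd_def sum_distrib_left mult.assoc)

definition bd_list :: "'v::linorder list \<Rightarrow> 'v set \<Rightarrow> rat" where
  "bd_list ys = (\<lambda>\<tau>. if 2 \<le> length ys then (\<Sum>j<length ys. (-1) ^ j * osimp (del_nth j ys) \<tau>) else 0)"

lemma incid_eq_sum_complex:
  assumes K: "simplicial_complex K" and s: "s \<in> K"
  shows "incid s \<tau> = (\<Sum>\<rho>\<in>K. incid s \<rho> * (if \<rho> = \<tau> then 1 else 0))"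
proof (cases "\<tau> \<in> K")
  case True
  then show ?thesis using finite_complex[OF K] by (simp add: if_distrib cong: if_cong)
next
  case False
  have "incid s \<tau> = 0"
  proof (rule ccontr)
    assume "incid s \<tau> \<noteq> 0"
    then obtain x where "\<tau> = s - {x}" "\<tau> \<noteq> {}"
      using incid_nonzeroE[OF _ finite_simplex[OF K s]] by blast
    then have "\<tau> \<in> K" by (intro face_in_complex[OF K s]) auto
    with False show False by simp
  qed
  with False show ?thesis by (simp add: sum.neutral)
qed

lemma bd_osimp:
  fixes ys :: "'v::linorder list"
  assumes K: "simplicial_complex K" and d: "distinct ys" and ys: "set ys \<in> K"
  shows "bd K (osimp ys) = bd_list ys"
proof
  fix \<tau>
  have bd_eq: "bd K (osimp ys) \<tau> = (-1) ^ inv_count ys * incid (set ys) \<tau>"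
  proof -
    have "bd K (osimp ys) \<tau> = (\<Sum>\<sigma>\<in>K. if \<sigma> = set ys then (-1) ^ inv_count ys * incid (set ys) \<tau> else 0)"
      unfolding bd_def osimp_def by (intro sum.cong) auto
    then show ?thesis using ys finite_complex[OF K] by simp
  qed
  show "bd K (osimp ys) \<tau> = bd_list ys \<tau>"
  proof (cases "2 \<le> length ys")
    case False
    moreover have "ys \<noteq> []" using simplex_nonempty[OF K ys] by auto
    ultimately obtain x where "ys = [x]" by (cases ys) (auto simp: Suc_le_eq)
    then show ?thesis using bd_eq unfolding bd_list_def by simp
  next
    case l: True
    have "incid (set ys) \<tau> = (\<Sum>i<length ys. (-1) ^ (inv_count ys + i + inv_count (del_nth i ys)) *
        (if set (del_nth i ys) = \<tau> then 1 else 0))"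
      by (subst incid_eq_sum_complex[OF K ys]) (rule sum_incid_del_nth[OF K d ys l])
    then have "bd K (osimp ys) \<tau> = (\<Sum>i<length ys. (-1) ^ inv_count ys *
        ((-1) ^ (inv_count ys + i + inv_count (del_nth i ys)) * (if set (del_nth i ys) = \<tau> then 1 else 0)))"
      by (simp only: bd_eq sum_distrib_left)
    also have "\<dots> = (\<Sum>j<length ys. (-1) ^ j * osimp (del_nth j ys) \<tau>)"
      unfolding osimp_def by (intro sum.cong) (auto simp: power_add mult.assoc)
    finally show ?thesis using l by (simp add: bd_list_def)
  qed
qed

lemma cocycle_alternating_sum:
  fixes xs :: "'v::linorder list"
  assumes K: "simplicial_complex K" and coc: "cocycle K p T"
    and d: "distinct xs" and xs: "set xs \<in> K" and l: "length xs = p + 2"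
  shows "(\<Sum>i<length xs. (-1) ^ i * cochain_eval T (del_nth i xs)) = 0"
proof -
  have "card (set xs) = p + 2" using d l by (simp add: distinct_card)
  then have "(\<Sum>\<rho>\<in>K. incid (set xs) \<rho> * T \<rho>) = 0" using coc xs unfolding cocycle_def by blast
  then have "(-1) ^ inv_count xs *
      (\<Sum>i<length xs. (-1) ^ (inv_count xs + i + inv_count (del_nth i xs)) * T (set (del_nth i xs))) = 0"
    using sum_incid_del_nth[OF K d xs] l by simp
  moreover have "(-1) ^ inv_count xs *
      (\<Sum>i<length xs. (-1) ^ (inv_count xs + i + inv_count (del_nth i xs)) * T (set (del_nth i xs))) =
      (\<Sum>i<length xs. (-1) ^ i * cochain_eval T (del_nth i xs))"
    unfolding sum_distrib_left cochain_eval_def by (intro sum.cong) (auto simp: power_add)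
  ultimately show ?thesis by simp
qed

lemma finite_total_has_least:
  assumes "finite F" "F \<noteq> {}" "\<forall>x\<in>F. \<forall>y\<in>F. R x y \<or> R y x"
    "\<forall>x\<in>F. \<forall>y\<in>F. \<forall>z\<in>F. R x y \<and> R y z \<longrightarrow> R x z"
  shows "\<exists>m\<in>F. \<forall>y\<in>F. R m y"
  using assms
proof (induction F rule: finite_ne_induct)
  case (singleton x)
  then show ?case by blast
next
  case (insert x F)
  have "\<exists>m\<in>F. \<forall>y\<in>F. R m y" using insert.prems by (intro insert.IH) blast+
  then obtain m where m: "m \<in> F" "\<forall>y\<in>F. R m y" by blast
  show ?case
  proof (cases "R x m")
    case True
    then have "R x y" if "y \<in> F" for y using insert.prems(2) m that by blast
    moreover have "R x x" using insert.prems(1) by blast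
    ultimately show ?thesis by blast
  next
    case False
    then have "R m x" using insert.prems(1) m(1) by blast
    with m show ?thesis by blast
  qed
qed

lemma finite_total_sorted_list:
  assumes "finite F" "\<forall>x\<in>F. \<forall>y\<in>F. R x y \<or> R y x"
    "\<forall>x\<in>F. \<forall>y\<in>F. \<forall>z\<in>F. R x y \<and> R y z \<longrightarrow> R x z"
  shows "\<exists>xs. set xs = F \<and> distinct xs \<and> sorted_wrt R xs"
  using assms
proof (induction "card F" arbitrary: F)
  case 0
  have "F = {}" using "0.hyps" "0.prems"(1) by simp
  then show ?case by simp
next
  case (Suc n)
  have "F \<noteq> {}" using Suc.hyps(2) by auto
  then obtain m where m: "m \<in> F" "\<forall>y\<in>F. R m y"
    using finite_total_has_least[OF Suc.prems(1) _ Suc.prems(2,3)] by blast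
  have "n = card (F - {m})" "finite (F - {m})" using Suc.hyps(2) Suc.prems(1) m(1) by simp_all
  moreover have "\<forall>x\<in>F - {m}. \<forall>y\<in>F - {m}. R x y \<or> R y x"
    and "\<forall>x\<in>F - {m}. \<forall>y\<in>F - {m}. \<forall>z\<in>F - {m}. R x y \<and> R y z \<longrightarrow> R x z"
    using Suc.prems(2,3) by blast+
  ultimately obtain xs where "set xs = F - {m}" "distinct xs" "sorted_wrt R xs"
    using Suc.hyps(1) by blast
  with m show ?case by (intro exI[of _ "m # xs"]) auto
qed

lemma sorted_wrt_set_unique:
  assumes "set xs = set ys" "distinct xs" "distinct ys" "sorted_wrt R xs" "sorted_wrt R ys"
    "\<forall>x\<in>set xs. \<forall>y\<in>set xs. R x y \<and> R y x \<longrightarrow> x = y"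
  shows "xs = ys"
  using assms
proof (induction xs arbitrary: ys)
  case Nil
  then show ?case by simp
next
  case (Cons x xs)
  obtain y ys' where ys: "ys = y # ys'" using Cons.prems(1) by (cases ys) auto
  have "x = y"
  proof (rule ccontr)
    assume "x \<noteq> y"
    then have "x \<in> set ys'" "y \<in> set xs" using Cons.prems(1) ys by (auto simp: set_eq_iff)
    then have "R y x" "R x y" using Cons.prems(4,5) ys by auto
    with Cons.prems(6) \<open>y \<in> set xs\<close> \<open>x \<noteq> y\<close> show False by (meson list.set_intros)
  qed
  moreover have "set xs = set ys'"
    using Cons.prems(1-3) ys \<open>x = y\<close> by (metis distinct.simps(2) insert_ident list.set(2))
  moreover have "xs = ys'"
    using Cons.prems(2-6) ys \<open>set xs = set ys'\<close> by (intro Cons.IH) auto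
  ultimately show ?case using ys by simp
qed

lemma ordering_on_simplex:
  assumes "ordering K R" "\<sigma> \<in> K"
  shows "\<forall>x\<in>\<sigma>. \<forall>y\<in>\<sigma>. R x y \<or> R y x"
    and "\<forall>x\<in>\<sigma>. \<forall>y\<in>\<sigma>. \<forall>z\<in>\<sigma>. R x y \<and> R y z \<longrightarrow> R x z"
    and "\<forall>x\<in>\<sigma>. \<forall>y\<in>\<sigma>. R x y \<and> R y x \<longrightarrow> x = y"
  using assms unfolding ordering_def by (meson UnionI)+

lemma good_ordering_ordering: "good_ordering K L R \<Longrightarrow> ordering K R"
  by (simp add: good_ordering_def)

lemma good_ordering_upward:
  "good_ordering K L R \<Longrightarrow> v \<in> \<Union>L \<Longrightarrow> w \<in> \<Union>K \<Longrightarrow> R v w \<Longrightarrow> w \<in> \<Union>L"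
  unfolding good_ordering_def by blast

lemma olist:
  assumes K: "simplicial_complex K" and R: "ordering K R" and \<sigma>: "\<sigma> \<in> K"
  shows "set (olist R \<sigma>) = \<sigma> \<and> distinct (olist R \<sigma>) \<and> sorted_wrt R (olist R \<sigma>)"
proof -
  obtain xs where xs: "set xs = \<sigma>" "distinct xs" "sorted_wrt R xs"
    using finite_total_sorted_list[OF finite_simplex[OF K \<sigma>] ordering_on_simplex(1,2)[OF R \<sigma>]]
    by blast
  have "ys = xs" if "set ys = \<sigma> \<and> distinct ys \<and> sorted_wrt R ys" for ys
    using sorted_wrt_set_unique[of ys xs R] that xs ordering_on_simplex(3)[OF R \<sigma>] by simp
  with xs have "\<exists>!xs. set xs = \<sigma> \<and> distinct xs \<and> sorted_wrt R xs" by blast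
  then show ?thesis unfolding olist_def by (rule theI')
qed

lemma olist_eqI:
  assumes K: "simplicial_complex K" and R: "ordering K R" and ys: "set ys \<in> K"
    and "distinct ys" "sorted_wrt R ys"
  shows "olist R (set ys) = ys"
proof (rule sorted_wrt_set_unique)
  show "\<forall>x\<in>set (olist R (set ys)). \<forall>y\<in>set (olist R (set ys)). R x y \<and> R y x \<longrightarrow> x = y"
    using olist[OF K R ys] ordering_on_simplex(3)[OF R ys] by simp
qed (use olist[OF K R ys] assms in auto)

lemma length_olist:
  "simplicial_complex K \<Longrightarrow> ordering K R \<Longrightarrow> \<sigma> \<in> K \<Longrightarrow> length (olist R \<sigma>) = card \<sigma>"
  using olist distinct_card by fastforce

subsection \<open>The cap product on a single simplex\<close>

definition cap_list :: "nat \<Rightarrow> ('v set \<Rightarrow> rat) \<Rightarrow> 'v::linorder list \<Rightarrow> 'v set \<Rightarrow> rat" where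
  "cap_list p T xs = (\<lambda>\<tau>. if p < length xs
     then cochain_eval T (take (Suc p) xs) * osimp (drop p xs) \<tau> else 0)"

lemma cap_simplex_olist:
  "cap_simplex p R T \<sigma> \<tau> = (-1) ^ inv_count (olist R \<sigma>) * cap_list p T (olist R \<sigma>) \<tau>"
  unfolding cap_simplex_def cap_list_def Let_def by simp

lemma cap_simplex_set:
  assumes "simplicial_complex K" "ordering K R" "set ys \<in> K" "distinct ys" "sorted_wrt R ys"
  shows "cap_simplex p R T (set ys) \<tau> = (-1) ^ inv_count ys * cap_list p T ys \<tau>"
  unfolding cap_simplex_olist olist_eqI[OF assms] ..

lemma cap_list_del_nth_front:
  assumes "i < Suc p" "Suc p < length xs"
  shows "cap_list p T (del_nth i xs) \<tau> =
    cochain_eval T (del_nth i (take (Suc (Suc p)) xs)) * osimp (drop (Suc p) xs) \<tau>"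
proof -
  have "take (Suc p) (del_nth i xs) = del_nth i (take (Suc (Suc p)) xs)"
    using assms by (simp add: del_nth_def take_drop min_def)
  moreover have "drop p (del_nth i xs) = drop (Suc p) xs"
    using assms by (simp add: del_nth_def min_def)
  moreover have "p < length (del_nth i xs)" using assms by simp
  ultimately show ?thesis unfolding cap_list_def by simp
qed

lemma cap_list_del_nth_back:
  assumes "Suc p + j < length xs"
  shows "cap_list p T (del_nth (Suc p + j) xs) \<tau> =
    cochain_eval T (take (Suc p) xs) * osimp (del_nth (Suc j) (drop p xs)) \<tau>"
proof -
  have "take (Suc p) (del_nth (Suc p + j) xs) = take (Suc p) xs"
    using assms by (simp add: del_nth_def min_def)
  moreover have "drop p (del_nth (Suc p + j) xs) = del_nth (Suc j) (drop p xs)"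
    using assms by (simp add: del_nth_def min_def drop_take add.commute)
  moreover have "p < length (del_nth (Suc p + j) xs)" using assms by simp
  ultimately show ?thesis unfolding cap_list_def by simp
qed

lemma sum_lessThan_plus: "(\<Sum>i<m + (n::nat). f i) = (\<Sum>i<m. f i) + (\<Sum>j<n. f (m + j))"
  by (induction n) (auto simp: add.assoc)

lemma sum_cap_list_front_faces:
  fixes xs :: "'v::linorder list"
  assumes K: "simplicial_complex K" and coc: "cocycle K p T" and ev: "even p"
    and d: "distinct xs" and xs: "set xs \<in> K" and l: "Suc p < length xs"
  shows "(\<Sum>i<Suc p. (-1) ^ i * cap_list p T (del_nth i xs) \<tau>) =
    cochain_eval T (take (Suc p) xs) * osimp (drop (Suc p) xs) \<tau>"
proof -
  define ys where "ys = take (Suc (Suc p)) xs"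
  have ys: "length ys = p + 2" "distinct ys" using l d by (simp_all add: ys_def)
  have "set ys \<in> K"
  proof (rule face_in_complex[OF K xs])
    show "set ys \<subseteq> set xs" by (simp add: ys_def set_take_subset)
    show "set ys \<noteq> {}" using ys(1) by auto
  qed
  have last: "del_nth (Suc p) ys = take (Suc p) xs"
    using l by (simp add: ys_def del_nth_def min_def)
  have "(\<Sum>i<Suc p. (-1) ^ i * cochain_eval T (del_nth i ys)) = cochain_eval T (take (Suc p) xs)"
    using cocycle_alternating_sum[OF K coc ys(2) \<open>set ys \<in> K\<close> ys(1)] ys(1) ev by (simp add: last)
  moreover have "(\<Sum>i<Suc p. (-1) ^ i * cap_list p T (del_nth i xs) \<tau>) =
      (\<Sum>i<Suc p. (-1) ^ i * cochain_eval T (del_nth i ys)) * osimp (drop (Suc p) xs) \<tau>"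
    unfolding sum_distrib_right ys_def using l
    by (intro sum.cong) (simp_all add: cap_list_del_nth_front mult.assoc)
  ultimately show ?thesis by simp
qed

text \<open>The evenness of p enters twice: in the cocycle relation on the first p + 2 vertices the last
  face has the sign (-1)^(p+1) = -1, and the face omitting the vertex number p + 1 + j has the sign
  (-1)^(p+1+j) = -(-1)^j of the corresponding face of the back simplex.\<close>

lemma sum_cap_list_del_nth:
  fixes xs :: "'v::linorder list"
  assumes K: "simplicial_complex K" and coc: "cocycle K p T" and ev: "even p"
    and d: "distinct xs" and xs: "set xs \<in> K" and p: "p < length xs"
  shows "(\<Sum>i<length xs. (-1) ^ i * cap_list p T (del_nth i xs) \<tau>) =
    cochain_eval T (take (Suc p) xs) * bd_list (drop p xs) \<tau>"
proof (cases "length xs = Suc p")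
  case True
  then show ?thesis by (simp add: bd_list_def cap_list_def)
next
  case False
  define q where "q = length xs - Suc p"
  have q: "1 \<le> q" "length xs = Suc p + q" using False p unfolding q_def by auto
  have back_faces: "(\<Sum>j<q. (-1) ^ (Suc p + j) * cap_list p T (del_nth (Suc p + j) xs) \<tau>) =
      (\<Sum>j<q. (-1) ^ (Suc p + j) *
        (cochain_eval T (take (Suc p) xs) * osimp (del_nth (Suc j) (drop p xs)) \<tau>))"
    using q by (intro sum.cong) (simp_all add: cap_list_del_nth_back[simplified])
  have "(\<Sum>i<length xs. (-1) ^ i * cap_list p T (del_nth i xs) \<tau>) =
      cochain_eval T (take (Suc p) xs) * osimp (drop (Suc p) xs) \<tau> +
      (\<Sum>j<q. (-1) ^ (Suc p + j) *
        (cochain_eval T (take (Suc p) xs) * osimp (del_nth (Suc j) (drop p xs)) \<tau>))"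
    unfolding q(2) sum_lessThan_plus back_faces
    using sum_cap_list_front_faces[OF K coc ev d xs] q by simp
  also have "\<dots> = cochain_eval T (take (Suc p) xs) * (osimp (drop (Suc p) xs) \<tau> +
      (\<Sum>j<q. (-1) ^ Suc j * osimp (del_nth (Suc j) (drop p xs)) \<tau>))"
    unfolding distrib_left sum_distrib_left using ev by (simp add: power_add mult.left_commute)
  also have "osimp (drop (Suc p) xs) \<tau> +
      (\<Sum>j<q. (-1) ^ Suc j * osimp (del_nth (Suc j) (drop p xs)) \<tau>) = bd_list (drop p xs) \<tau>"
  proof -
    have "bd_list (drop p xs) \<tau> = (\<Sum>j<Suc q. (-1) ^ j * osimp (del_nth j (drop p xs)) \<tau>)"
      unfolding bd_list_def using q by simp
    then show ?thesis unfolding sum.lessThan_Suc_shift by (simp add: del_nth_def)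
  qed
  finally show ?thesis .
qed

lemma sum_incid_cap_simplex:
  fixes \<sigma> :: "'v::linorder set"
  assumes K: "simplicial_complex K" and R: "ordering K R" and \<sigma>: "\<sigma> \<in> K"
  shows "(\<Sum>\<rho>\<in>K. incid \<sigma> \<rho> * cap_simplex p R T \<rho> \<tau>) =
    (-1) ^ inv_count (olist R \<sigma>) * (\<Sum>i<length (olist R \<sigma>). (-1) ^ i * cap_list p T (del_nth i (olist R \<sigma>)) \<tau>)"
proof -
  define xs where "xs = olist R \<sigma>"
  have xs: "set xs = \<sigma>" "distinct xs" "sorted_wrt R xs" using olist[OF K R \<sigma>] by (simp_all add: xs_def)
  show ?thesis
  proof (cases "2 \<le> length xs")
    case l: True
    have "(\<Sum>\<rho>\<in>K. incid \<sigma> \<rho> * cap_simplex p R T \<rho> \<tau>) =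
       (\<Sum>i<length xs. (-1) ^ (inv_count xs + i + inv_count (del_nth i xs)) * cap_simplex p R T (set (del_nth i xs)) \<tau>)"
      using sum_incid_del_nth[OF K xs(2) _ l] xs(1) \<sigma> by simp
    also have "\<dots> = (\<Sum>i<length xs. (-1) ^ inv_count xs * ((-1) ^ i * cap_list p T (del_nth i xs) \<tau>))"
    proof (rule sum.cong)
      fix i assume i: "i \<in> {..<length xs}"
      have "set (del_nth i xs) \<in> K"
        using del_nth_face[OF K _ xs(2) _ l] i xs(1) \<sigma> by simp
      then show "(-1) ^ (inv_count xs + i + inv_count (del_nth i xs)) * cap_simplex p R T (set (del_nth i xs)) \<tau> =
         (-1) ^ inv_count xs * ((-1) ^ i * cap_list p T (del_nth i xs) \<tau>)"
        using cap_simplex_set[OF K R _ distinct_del_nth[OF xs(2)] sorted_wrt_del_nth[OF xs(3)]]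
        by (simp add: power_add mult.assoc)
    qed simp
    finally show ?thesis by (simp add: xs_def sum_distrib_left)
  next
    case False
    moreover have "xs \<noteq> []" using simplex_nonempty[OF K \<sigma>] xs(1) by auto
    ultimately obtain x where x: "xs = [x]" by (cases xs) (auto simp: Suc_le_eq)
    then have "\<sigma> = {x}" using xs(1) by simp
    with x show ?thesis unfolding xs_def[symmetric] by (simp add: cap_list_def)
  qed
qed

lemma bd_cap_simplex:
  fixes \<sigma> :: "'v::linorder set"
  assumes K: "simplicial_complex K" and R: "ordering K R" and coc: "cocycle K p T" and ev: "even p"
    and \<sigma>: "\<sigma> \<in> K"
  shows "bd K (cap_simplex p R T \<sigma>) \<tau> = (\<Sum>\<rho>\<in>K. incid \<sigma> \<rho> * cap_simplex p R T \<rho> \<tau>)"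
proof -
  define xs where "xs = olist R \<sigma>"
  have xs: "set xs = \<sigma>" "distinct xs" using olist[OF K R \<sigma>] by (simp_all add: xs_def)
  have "bd K (cap_simplex p R T \<sigma>) \<tau> =
      (-1) ^ inv_count xs * (\<Sum>i<length xs. (-1) ^ i * cap_list p T (del_nth i xs) \<tau>)"
  proof (cases "p < length xs")
    case True
    have "set (drop p xs) \<in> K"
      using face_in_complex[OF K \<sigma>] True xs(1) by (auto simp: set_drop_subset)
    then have "bd K (osimp (drop p xs)) \<tau> = bd_list (drop p xs) \<tau>"
      using bd_osimp[OF K] xs(2) by simp
    moreover have "cap_simplex p R T \<sigma> =
        (\<lambda>\<tau>. ((-1) ^ inv_count xs * cochain_eval T (take (Suc p) xs)) * osimp (drop p xs) \<tau>)"
      using True by (simp add: fun_eq_iff cap_simplex_olist cap_list_def xs_def)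
    ultimately have "bd K (cap_simplex p R T \<sigma>) \<tau> =
        (-1) ^ inv_count xs * (cochain_eval T (take (Suc p) xs) * bd_list (drop p xs) \<tau>)"
      by (simp add: bd_cmult)
    then show ?thesis using sum_cap_list_del_nth[OF K coc ev xs(2) _ True] xs(1) \<sigma> by simp
  next
    case False
    then have "cap_simplex p R T \<sigma> = (\<lambda>_. 0)"
      by (simp add: fun_eq_iff cap_simplex_olist cap_list_def xs_def)
    moreover have "cap_list p T (del_nth i xs) \<tau> = 0" if "i < length xs" for i
    proof -
      have "\<not> p < length (del_nth i xs)" using False that by simp
      then show ?thesis by (simp add: cap_list_def)
    qed
    ultimately show ?thesis by (simp add: bd_def)
  qed
  then show ?thesis using sum_incid_cap_simplex[OF K R \<sigma>] by (simp add: xs_def)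
qed

lemma rel_cochain_Wcomplex_meets:
  "rel_cochain K (Wcomplex K L) p T \<Longrightarrow> T \<sigma> \<noteq> 0 \<Longrightarrow> \<sigma> \<inter> \<Union>L \<noteq> {}"
  unfolding rel_cochain_def Wcomplex_def by blast

lemma cap_simplex_support:
  fixes \<sigma> :: "'v::linorder set"
  assumes K: "simplicial_complex K" and F: "full_subcomplex L K" and R: "good_ordering K L R"
    and T: "rel_cochain K (Wcomplex K L) p T" and \<sigma>: "\<sigma> \<in> K"
    and nz: "cap_simplex p R T \<sigma> \<tau> \<noteq> 0"
  shows "\<tau> \<subseteq> \<sigma> \<and> \<tau> \<in> L \<and> card \<tau> + p = card \<sigma>"
proof -
  define xs where "xs = olist R \<sigma>"
  have xs: "set xs = \<sigma>" "distinct xs" "sorted_wrt R xs"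
    using olist[OF K good_ordering_ordering[OF R] \<sigma>] by (simp_all add: xs_def)
  have "cap_list p T xs \<tau> \<noteq> 0" using nz by (simp add: cap_simplex_olist xs_def)
  then have p: "p < length xs" and T_front: "T (set (take (Suc p) xs)) \<noteq> 0" and \<tau>: "\<tau> = set (drop p xs)"
    unfolding cap_list_def cochain_eval_def osimp_def by (auto split: if_splits)
  obtain a where a: "a \<in> set (take (Suc p) xs)" "a \<in> \<Union>L"
    using rel_cochain_Wcomplex_meets[OF T T_front] by blast
  then obtain i where i: "i < Suc p" "i < length xs" "xs ! i = a" by (auto simp: in_set_conv_nth)
  have "b \<in> \<Union>L" if "b \<in> \<tau>" for b
  proof -
    from that obtain k where "k < length (drop p xs)" "drop p xs ! k = b"
      unfolding \<tau> by (metis in_set_conv_nth)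
    then have k: "p + k < length xs" "xs ! (p + k) = b" using p by simp_all
    show ?thesis
    proof (cases "i = p + k")
      case False
      then have "R a b" using sorted_wrt_nth_less[OF xs(3), of i "p + k"] i k by simp
      moreover have "b \<in> \<Union>K" using k xs(1) \<sigma> nth_mem by blast
      ultimately show ?thesis using good_ordering_upward[OF R a(2)] by blast
    qed (use i k a in simp)
  qed
  moreover have "\<tau> \<subseteq> \<sigma>" "\<tau> \<noteq> {}" using \<tau> p xs(1) set_drop_subset[of p xs] by auto
  moreover have "card \<tau> + p = card \<sigma>"
    using \<tau> p distinct_card[OF xs(2)] distinct_card[OF distinct_drop[OF xs(2)], of p]
    by (simp add: xs(1)[symmetric])
  ultimately show ?thesis
    using full_subcomplexD[OF F face_in_complex[OF K \<sigma>]] by blast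
qed

lemma sum_cap_simplex_vertices:
  assumes K: "simplicial_complex K" and R: "ordering K R" and \<sigma>: "\<sigma> \<in> K" and c: "card \<sigma> = Suc p"
  shows "(\<Sum>\<rho>\<in>K. cap_simplex p R T \<sigma> \<rho>) = T \<sigma>"
proof -
  define xs where "xs = olist R \<sigma>"
  have xs: "set xs = \<sigma>" "length xs = Suc p"
    using olist[OF K R \<sigma>] length_olist[OF K R \<sigma>] c by (simp_all add: xs_def)
  then have drop: "drop p xs = [xs ! p]" using Cons_nth_drop_Suc[of p xs] by simp
  have "{xs ! p} \<in> K" using face_in_complex[OF K \<sigma>] xs by auto
  moreover have "cap_simplex p R T \<sigma> \<rho> = (if \<rho> = {xs ! p} then (-1) ^ inv_count xs * cochain_eval T xs else 0)" for \<rho>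
    using xs(2) by (simp add: cap_simplex_olist xs_def[symmetric] cap_list_def osimp_def drop inv_count_Cons)
  ultimately have "(\<Sum>\<rho>\<in>K. cap_simplex p R T \<sigma> \<rho>) = (-1) ^ inv_count xs * cochain_eval T xs"
    using finite_complex[OF K] by simp
  then show ?thesis by (simp add: cochain_eval_def xs(1))
qed

definition linext :: "'v set set \<Rightarrow> ('v set \<Rightarrow> 'v set \<Rightarrow> rat) \<Rightarrow> ('v set \<Rightarrow> rat) \<Rightarrow> ('v set \<Rightarrow> rat)" where
  "linext K F c = (\<lambda>\<tau>. \<Sum>\<sigma>\<in>K. c \<sigma> * F \<sigma> \<tau>)"

lemma bd_linext: "bd K = linext K incid"
  by (simp add: fun_eq_iff bd_def linext_def)

lemma cap_linext: "cap K p R T = linext K (cap_simplex p R T)"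
  by (simp add: fun_eq_iff cap_def linext_def)

lemma linext_linext: "linext K F (linext K G c) = linext K (\<lambda>\<sigma>. linext K F (G \<sigma>)) c"
proof
  fix \<tau>
  have "linext K F (linext K G c) \<tau> = (\<Sum>\<rho>\<in>K. \<Sum>\<sigma>\<in>K. c \<sigma> * G \<sigma> \<rho> * F \<rho> \<tau>)"
    unfolding linext_def sum_distrib_right ..
  also have "\<dots> = (\<Sum>\<sigma>\<in>K. \<Sum>\<rho>\<in>K. c \<sigma> * G \<sigma> \<rho> * F \<rho> \<tau>)" by (rule sum.swap)
  also have "\<dots> = linext K (\<lambda>\<sigma>. linext K F (G \<sigma>)) c \<tau>"
    unfolding linext_def sum_distrib_left by (simp add: mult.assoc)
  finally show "linext K F (linext K G c) \<tau> = linext K (\<lambda>\<sigma>. linext K F (G \<sigma>)) c \<tau>" .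
qed

lemma linext_cong:
  assumes "\<And>\<sigma>. \<sigma> \<in> K \<Longrightarrow> c \<sigma> \<noteq> 0 \<Longrightarrow> F \<sigma> = G \<sigma>"
  shows "linext K F c = linext K G c"
  unfolding linext_def
proof (rule ext, rule sum.cong)
  fix \<tau> \<sigma> assume "\<sigma> \<in> K"
  then show "c \<sigma> * F \<sigma> \<tau> = c \<sigma> * G \<sigma> \<tau>" using assms by (cases "c \<sigma> = 0") auto
qed simp

lemma linext_diff: "linext K (\<lambda>\<sigma> \<tau>. F \<sigma> \<tau> - G \<sigma> \<tau>) c \<tau> = linext K F c \<tau> - linext K G c \<tau>"
  unfolding linext_def by (simp add: right_diff_distrib sum_subtractf)

lemma linext_add: "linext K (\<lambda>\<sigma> \<tau>. F \<sigma> \<tau> + G \<sigma> \<tau>) c \<tau> = linext K F c \<tau> + linext K G c \<tau>"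
  unfolding linext_def by (simp add: distrib_left sum.distrib)

lemma linext_add_chain: "linext K F (\<lambda>\<sigma>. a \<sigma> + b \<sigma>) \<tau> = linext K F a \<tau> + linext K F b \<tau>"
  unfolding linext_def by (simp add: distrib_right sum.distrib)

lemma linext_nonzeroE:
  assumes "linext K F c \<tau> \<noteq> 0"
  obtains \<sigma> where "\<sigma> \<in> K" "c \<sigma> \<noteq> 0" "F \<sigma> \<tau> \<noteq> 0"
proof -
  from assms have "\<exists>\<sigma>\<in>K. c \<sigma> * F \<sigma> \<tau> \<noteq> 0" unfolding linext_def by (meson sum.neutral)
  then show ?thesis using that by auto
qed

definition unit_chain :: "'v set \<Rightarrow> 'v set \<Rightarrow> rat" where
  "unit_chain \<rho> = (\<lambda>\<tau>. if \<tau> = \<rho> then 1 else 0)"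

lemma linext_unit_chain:
  assumes "finite K" "\<And>\<sigma>. c \<sigma> \<noteq> 0 \<Longrightarrow> \<sigma> \<in> K"
  shows "linext K unit_chain c = c"
proof
  fix \<tau>
  have "linext K unit_chain c \<tau> = (\<Sum>\<sigma>\<in>K. if \<sigma> = \<tau> then c \<tau> else 0)"
    unfolding linext_def unit_chain_def by (intro sum.cong) auto
  also have "\<dots> = c \<tau>" using assms by (cases "\<tau> \<in> K") auto
  finally show "linext K unit_chain c \<tau> = c \<tau>" .
qed

lemma bd_unit_chain:
  assumes "finite K" "\<sigma> \<in> K" shows "bd K (unit_chain \<sigma>) = incid \<sigma>"
proof
  fix \<tau>
  have "bd K (unit_chain \<sigma>) \<tau> = (\<Sum>\<rho>\<in>K. if \<rho> = \<sigma> then incid \<sigma> \<tau> else 0)"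
    unfolding bd_def unit_chain_def by (intro sum.cong) auto
  then show "bd K (unit_chain \<sigma>) \<tau> = incid \<sigma> \<tau>" using assms by simp
qed

lemma bd_subcomplex:
  assumes "finite K" "L \<subseteq> K" "\<And>\<sigma>. c \<sigma> \<noteq> 0 \<Longrightarrow> \<sigma> \<in> L"
  shows "bd L c = bd K c"
  unfolding bd_def fun_eq_iff using assms by (intro allI sum.mono_neutral_left) auto

lemma incid_incid_pair_cancel:
  fixes s :: "'v::linorder set"
  assumes f: "finite s" and a: "a \<in> s" and b: "b \<in> s" and ab: "a < b" and ne: "s - {a, b} \<noteq> {}"
  shows "incid s (s - {a}) * incid (s - {a}) (s - {a, b}) +
    incid s (s - {b}) * incid (s - {b}) (s - {a, b}) = 0"
proof -
  have faces: "s - {a, b} = (s - {a}) - {b}" "s - {a, b} = (s - {b}) - {a}" by auto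
  have "incid s (s - {a}) = (-1) ^ num_below a s" "incid s (s - {b}) = (-1) ^ num_below b s"
    using incid_Diff_singleton[OF f] a b ne by auto
  moreover have "incid (s - {a}) (s - {a, b}) = (-1) ^ num_below b (s - {a})"
    unfolding faces(1) using incid_Diff_singleton[of "s - {a}" b] f b ab ne faces by auto
  moreover have "incid (s - {b}) (s - {a, b}) = (-1) ^ num_below a (s - {b})"
    unfolding faces(2) using incid_Diff_singleton[of "s - {b}" a] f a ab ne faces by auto
  moreover have "num_below b s = num_below b (s - {a}) + 1" "num_below a s = num_below a (s - {b})"
    using num_below_Diff_singleton[OF f a, of b] num_below_Diff_singleton[OF f b, of a] ab by simp_all
  ultimately show ?thesis by (simp add: power_add)
qed

lemma incid_incid_nonzeroE:
  assumes "incid \<sigma> \<rho> * incid \<rho> \<tau> \<noteq> 0" "finite \<sigma>"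
  obtains x y where "x \<in> \<sigma>" "y \<in> \<sigma>" "x \<noteq> y" "\<rho> = \<sigma> - {x}" "\<tau> = \<sigma> - {x, y}" "\<tau> \<noteq> {}"
proof -
  have nz: "incid \<sigma> \<rho> \<noteq> 0" "incid \<rho> \<tau> \<noteq> 0" using assms(1) by auto
  obtain x where x: "x \<in> \<sigma>" "\<rho> = \<sigma> - {x}" using incid_nonzeroE[OF nz(1) assms(2)] by blast
  then have "finite \<rho>" using assms(2) by simp
  then obtain y where "y \<in> \<rho>" "\<tau> = \<rho> - {y}" "\<tau> \<noteq> {}" using incid_nonzeroE[OF nz(2)] by blast
  with x show ?thesis using that[of x y] by auto
qed

lemma sum_incid_incid:
  fixes \<sigma> :: "'v::linorder set"
  assumes K: "simplicial_complex K" and \<sigma>: "\<sigma> \<in> K"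
  shows "(\<Sum>\<rho>\<in>K. incid \<sigma> \<rho> * incid \<rho> \<tau>) = 0"
proof (cases "\<exists>\<rho>\<in>K. incid \<sigma> \<rho> * incid \<rho> \<tau> \<noteq> 0")
  case False
  then show ?thesis by (intro sum.neutral) blast
next
  case True
  have fin: "finite \<sigma>" using finite_simplex[OF K \<sigma>] .
  from True obtain \<rho>\<^sub>0 where "incid \<sigma> \<rho>\<^sub>0 * incid \<rho>\<^sub>0 \<tau> \<noteq> 0" by blast
  then obtain a b where ab: "a \<in> \<sigma>" "b \<in> \<sigma>" "a \<noteq> b" "\<rho>\<^sub>0 = \<sigma> - {a}" "\<tau> = \<sigma> - {a, b}" "\<tau> \<noteq> {}"
    by (rule incid_incid_nonzeroE[OF _ fin])
  \<comment> \<open>only the two faces between \<sigma> and \<tau> contribute, and they cancel\<close>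
  have two_faces: "\<rho> \<in> {\<sigma> - {a}, \<sigma> - {b}}" if nz: "incid \<sigma> \<rho> * incid \<rho> \<tau> \<noteq> 0" for \<rho>
  proof -
    obtain x y where "x \<in> \<sigma>" "y \<in> \<sigma>" "\<rho> = \<sigma> - {x}" "\<tau> = \<sigma> - {x, y}"
      using incid_incid_nonzeroE[OF nz fin] by blast
    then have "x \<in> {a, b}" using ab(5) by blast
    with \<open>\<rho> = \<sigma> - {x}\<close> show ?thesis by blast
  qed
  have "\<sigma> - {a} \<in> K" "\<sigma> - {b} \<in> K"
    by (rule face_in_complex[OF K \<sigma>]; use ab in blast)+
  then have "(\<Sum>\<rho>\<in>K. incid \<sigma> \<rho> * incid \<rho> \<tau>) = (\<Sum>\<rho>\<in>{\<sigma> - {a}, \<sigma> - {b}}. incid \<sigma> \<rho> * incid \<rho> \<tau>)"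
    using finite_complex[OF K] two_faces by (intro sum.mono_neutral_right) blast+
  also have "\<dots> = incid \<sigma> (\<sigma> - {a}) * incid (\<sigma> - {a}) \<tau> + incid \<sigma> (\<sigma> - {b}) * incid (\<sigma> - {b}) \<tau>"
    using ab by (subst sum.insert) auto
  also have "\<dots> = 0"
  proof (cases "a < b")
    case True
    then show ?thesis using incid_incid_pair_cancel[OF fin ab(1,2) True] ab(5,6) by simp
  next
    case False
    then have "b < a" "\<tau> = \<sigma> - {b, a}" using ab(3,5) by auto
    then show ?thesis using incid_incid_pair_cancel[OF fin ab(2,1)] ab(6) by simp
  qed
  finally show ?thesis .
qed

lemma bd_incid:
  assumes "simplicial_complex K" "\<sigma> \<in> K"
  shows "bd K (incid \<sigma>) = (\<lambda>_. 0)"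
  using sum_incid_incid[OF assms] by (simp add: fun_eq_iff bd_def)

subsection \<open>The cap product as a chain map\<close>

lemma cap_chain_map:
  assumes K: "simplicial_complex K" and R: "ordering K R" and coc: "cocycle K p T" and ev: "even p"
  shows "bd K (cap K p R T c) = cap K p R T (bd K c)"
proof -
  have "bd K (cap K p R T c) = linext K (\<lambda>\<sigma>. bd K (cap_simplex p R T \<sigma>)) c"
    unfolding cap_linext bd_linext linext_linext ..
  also have "\<dots> = linext K (\<lambda>\<sigma>. linext K (cap_simplex p R T) (incid \<sigma>)) c"
    by (rule linext_cong) (simp add: fun_eq_iff linext_def bd_cap_simplex[OF K R coc ev])
  also have "\<dots> = cap K p R T (bd K c)"
    unfolding cap_linext bd_linext linext_linext ..
  finally show ?thesis .
qed

lemma cap_chain: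
  assumes K: "simplicial_complex K" and F: "full_subcomplex L K" and R: "good_ordering K L R"
    and T: "rel_cochain K (Wcomplex K L) p T"
    and K0: "simplicial_complex K0" "K0 \<subseteq> K" and c: "chain K0 k c"
  shows "chain (K0 \<inter> L) (k - p) (cap K p R T c)"
  unfolding chain_def
proof (intro allI impI)
  fix \<tau> assume "cap K p R T c \<tau> \<noteq> 0"
  then obtain \<sigma> where \<sigma>: "\<sigma> \<in> K" "c \<sigma> \<noteq> 0" "cap_simplex p R T \<sigma> \<tau> \<noteq> 0"
    unfolding cap_linext by (rule linext_nonzeroE)
  have \<sigma>0: "\<sigma> \<in> K0" "card \<sigma> = Suc k" using c \<sigma>(2) unfolding chain_def by auto
  have \<tau>: "\<tau> \<subseteq> \<sigma>" "\<tau> \<in> L" "card \<tau> + p = card \<sigma>"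
    using cap_simplex_support[OF K F R T \<sigma>(1,3)] by auto
  have "\<tau> \<noteq> {}" using \<tau>(2) full_subcomplex_subset[OF F] simplex_nonempty[OF K] by blast
  then have "\<tau> \<in> K0" "card \<tau> \<noteq> 0"
    using face_in_complex[OF K0(1) \<sigma>0(1) \<tau>(1)] finite_subset[OF \<tau>(1) finite_simplex[OF K \<sigma>(1)]]
    by auto
  then show "\<tau> \<in> K0 \<inter> L \<and> card \<tau> = Suc (k - p)" using \<tau> \<sigma>0 by auto
qed

subsection \<open>Cones\<close>

text \<open>The sign is chosen so that the cone from v turns the oriented simplex [x0, ..., xk] into
  [v, x0, ..., xk] (cone_osimp).\<close>

definition cone :: "'v::linorder \<Rightarrow> ('v set \<Rightarrow> rat) \<Rightarrow> ('v set \<Rightarrow> rat)" where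
  "cone v z = (\<lambda>\<tau>. if v \<in> \<tau> \<and> \<tau> - {v} \<noteq> {} then (-1) ^ num_below v \<tau> * z (\<tau> - {v}) else 0)"

lemma cone_zero [simp]: "cone v (\<lambda>_. 0) = (\<lambda>_. 0)"
  by (simp add: fun_eq_iff cone_def)

lemma cone_linext: "cone v (linext K G c) = linext K (\<lambda>\<sigma>. cone v (G \<sigma>)) c"
  by (auto simp: fun_eq_iff cone_def linext_def sum_distrib_left mult.left_commute)

lemma cone_osimp:
  assumes "distinct xs" "xs \<noteq> []" "v \<notin> set xs"
  shows "cone v (osimp xs) = osimp (v # xs)"
proof
  fix \<tau>
  show "cone v (osimp xs) \<tau> = osimp (v # xs) \<tau>"
  proof (cases "\<tau> = insert v (set xs)")
    case True
    moreover have "insert v (set xs) - {v} = set xs" "\<not> set xs \<subseteq> {v}"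
      using assms(2,3) by (auto simp: subset_singleton_iff)
    ultimately show ?thesis
      using assms by (simp add: cone_def osimp_def inv_count_Cons num_below_set power_add)
  next
    case False
    then have "\<not> (v \<in> \<tau> \<and> \<tau> - {v} = set xs)" by auto
    with False show ?thesis by (auto simp: cone_def osimp_def)
  qed
qed

lemma cone_osimp_mem: "v \<in> set xs \<Longrightarrow> cone v (osimp xs) = (\<lambda>_. 0)"
  by (auto simp: fun_eq_iff cone_def osimp_def)

lemma osimp_move_to_front:
  fixes xs :: "'v::linorder list"
  assumes d: "distinct xs" and k: "k < length xs"
  shows "(-1) ^ k * osimp (xs ! k # del_nth k xs) \<tau> = osimp xs \<tau>"
proof -
  define m where "m = length (filter (\<lambda>w. xs ! k < w) (take k xs))"
  have "m \<le> k" using k by (simp add: m_def) (metis length_filter_le length_take min.absorb4)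
  have "num_below (xs ! k) (set (del_nth k xs)) = num_below (xs ! k) (set xs)"
    using num_below_Diff_singleton[of "set xs" "xs ! k" "xs ! k"] k by (simp add: set_del_nth[OF d k])
  then have "inv_count (xs ! k # del_nth k xs) = num_below (xs ! k) (set xs) + inv_count (del_nth k xs)"
    by (simp add: inv_count_Cons num_below_set[OF distinct_del_nth[OF d]])
  then have "k + inv_count (xs ! k # del_nth k xs) = inv_count xs + 2 * (k - m)"
    using inv_count_del_nth[OF d k] \<open>m \<le> k\<close> by (simp add: m_def)
  then have "(-1::rat) ^ k * (-1) ^ inv_count (xs ! k # del_nth k xs) = (-1) ^ inv_count xs"
    unfolding power_add[symmetric] by (simp add: power_add power_mult)
  moreover have "set (xs ! k # del_nth k xs) = set xs"
    using set_del_nth[OF d k] nth_mem[OF k] by auto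
  ultimately show ?thesis unfolding osimp_def by simp
qed

lemma bd_list_Cons:
  assumes "xs \<noteq> []"
  shows "bd_list (v # xs) \<tau> = osimp xs \<tau> - (\<Sum>j<length xs. (-1) ^ j * osimp (v # del_nth j xs) \<tau>)"
proof -
  have "bd_list (v # xs) \<tau> = (\<Sum>j<Suc (length xs). (-1) ^ j * osimp (del_nth j (v # xs)) \<tau>)"
    using assms by (simp add: bd_list_def Suc_le_eq)
  also have "\<dots> = osimp xs \<tau> - (\<Sum>j<length xs. (-1) ^ j * osimp (v # del_nth j xs) \<tau>)"
    unfolding sum.lessThan_Suc_shift by (simp add: sum_negf)
  finally show ?thesis .
qed

lemma cone_bd_list:
  "cone v (bd_list xs) \<tau> =
    (if 2 \<le> length xs then (\<Sum>j<length xs. (-1) ^ j * cone v (osimp (del_nth j xs)) \<tau>) else 0)"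
  by (auto simp: cone_def bd_list_def sum_distrib_left mult.left_commute)

lemma cone_bd_list_not_mem:
  assumes d: "distinct xs" and l: "2 \<le> length xs" and v: "v \<notin> set xs"
  shows "cone v (bd_list xs) \<tau> = (\<Sum>j<length xs. (-1) ^ j * osimp (v # del_nth j xs) \<tau>)"
proof -
  have "cone v (osimp (del_nth j xs)) = osimp (v # del_nth j xs)" if "j < length xs" for j
    using that l d v set_del_nth[OF d that]
    by (intro cone_osimp) (auto simp: distinct_del_nth del_nth_nonempty)
  then show ?thesis using l by (simp add: cone_bd_list)
qed

lemma cone_bd_list_mem:
  fixes xs :: "'v::linorder list"
  assumes d: "distinct xs" and l: "2 \<le> length xs" and v: "v \<in> set xs"
  shows "cone v (bd_list xs) \<tau> = osimp xs \<tau>"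
proof -
  obtain k where k: "k < length xs" "xs ! k = v" using v by (auto simp: in_set_conv_nth)
  \<comment> \<open>only the face omitting v survives the cone\<close>
  have single: "cone v (osimp (del_nth j xs)) \<tau> = (if j = k then osimp (v # del_nth k xs) \<tau> else 0)"
    if "j < length xs" for j
  proof (cases "j = k")
    case True
    then show ?thesis using k l d set_del_nth[OF d k(1)]
      by (simp add: cone_osimp distinct_del_nth del_nth_nonempty)
  next
    case False
    then have "v \<noteq> xs ! j" using k d that by (metis nth_eq_iff_index_eq)
    then have "v \<in> set (del_nth j xs)"
      using set_del_nth[OF d that] k nth_mem[OF k(1)] by blast
    with False show ?thesis by (simp add: cone_osimp_mem)
  qed
  have "(\<Sum>j<length xs. (-1) ^ j * cone v (osimp (del_nth j xs)) \<tau>) =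
      (\<Sum>j<length xs. if j = k then (-1) ^ k * osimp (v # del_nth k xs) \<tau> else 0)"
    by (intro sum.cong) (simp_all add: single)
  then have "cone v (bd_list xs) \<tau> = (-1) ^ k * osimp (v # del_nth k xs) \<tau>"
    using l k by (simp add: cone_bd_list)
  also have "\<dots> = osimp xs \<tau>" using osimp_move_to_front[OF d k(1)] k(2) by simp
  finally show ?thesis .
qed

lemma cone_identity_osimp:
  fixes xs :: "'v::linorder list"
  assumes K: "simplicial_complex K" and d: "distinct xs" "xs \<noteq> []" and v: "insert v (set xs) \<in> K"
  shows "bd K (cone v (osimp xs)) \<tau> + cone v (bd K (osimp xs)) \<tau> =
    osimp xs \<tau> - (if length xs = 1 then osimp [v] \<tau> else 0)"
proof -
  have bd_xs: "bd K (osimp xs) = bd_list xs"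
    using face_in_complex[OF K v] d by (intro bd_osimp[OF K d(1)]) auto
  have "length xs = 1 \<or> 2 \<le> length xs" using d(2) by (cases xs) (auto simp: Suc_le_eq)
  then consider "length xs = 1" | "2 \<le> length xs" by blast
  then show ?thesis
  proof cases
    case 1
    then obtain x where x: "xs = [x]" by (cases xs) auto
    show ?thesis
    proof (cases "x = v")
      case False
      have "bd K (osimp [v, x]) \<tau> = osimp [x] \<tau> - osimp [v] \<tau>"
        using bd_osimp[OF K, of "[v, x]"] v x False by (simp add: bd_list_Cons)
      then show ?thesis using False x 1 bd_xs by (simp add: cone_osimp cone_bd_list)
    qed (use x bd_xs in \<open>simp add: cone_osimp_mem cone_bd_list bd_def\<close>)
  next
    case 2
    show ?thesis
    proof (cases "v \<in> set xs")
      case False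
      have "bd K (cone v (osimp xs)) \<tau> = bd_list (v # xs) \<tau>"
        using bd_osimp[OF K, of "v # xs"] v False d by (simp add: cone_osimp)
      then show ?thesis
        using 2 bd_xs d False by (simp add: bd_list_Cons cone_bd_list_not_mem)
    next
      case True
      then show ?thesis
        using 2 bd_xs d by (simp add: cone_osimp_mem bd_def cone_bd_list_mem)
    qed
  qed
qed

lemma osimp_sorted_list_of_set: "finite \<sigma> \<Longrightarrow> osimp (sorted_list_of_set \<sigma>) = unit_chain \<sigma>"
  by (simp add: fun_eq_iff osimp_def unit_chain_def inv_count_sorted)

lemma cone_identity_unit_chain:
  fixes \<sigma> :: "'v::linorder set"
  assumes K: "simplicial_complex K" and \<sigma>: "finite \<sigma>" "\<sigma> \<noteq> {}" and v: "insert v \<sigma> \<in> K"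
  shows "bd K (cone v (unit_chain \<sigma>)) \<tau> + cone v (incid \<sigma>) \<tau> =
    unit_chain \<sigma> \<tau> - (if card \<sigma> = 1 \<and> \<tau> = {v} then 1 else 0)"
proof -
  define xs where "xs = sorted_list_of_set \<sigma>"
  have xs: "distinct xs" "xs \<noteq> []" "set xs = \<sigma>" "length xs = card \<sigma>"
    using \<sigma> by (simp_all add: xs_def)
  have "\<sigma> \<in> K" using face_in_complex[OF K v] \<sigma>(2) by auto
  then have "incid \<sigma> = bd K (osimp xs)"
    using bd_unit_chain[OF finite_complex[OF K]] \<sigma>(1) by (simp add: xs_def osimp_sorted_list_of_set)
  moreover have "osimp xs = unit_chain \<sigma>" using \<sigma>(1) by (simp add: xs_def osimp_sorted_list_of_set)
  moreover have "osimp [v] \<tau> = (if \<tau> = {v} then 1 else 0)" by (simp add: osimp_def inv_count_Cons)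
  ultimately show ?thesis
    using cone_identity_osimp[OF K xs(1,2), of v \<tau>] v xs(3,4) by auto
qed

lemma cone_identity:
  fixes v :: "'v::linorder"
  assumes K: "simplicial_complex K" and S: "S \<in> K" and v: "v \<in> S"
    and z: "\<And>\<rho>. z \<rho> \<noteq> 0 \<Longrightarrow> \<rho> \<subseteq> S \<and> \<rho> \<noteq> {}"
  shows "bd K (cone v z) \<tau> + cone v (bd K z) \<tau> =
    z \<tau> - (if \<tau> = {v} then (\<Sum>\<rho>\<in>K. if card \<rho> = 1 then z \<rho> else 0) else 0)"
proof -
  have fin: "finite K" using finite_complex[OF K] .
  have zK: "\<rho> \<in> K" if "z \<rho> \<noteq> 0" for \<rho> using z[OF that] face_in_complex[OF K S] by blast
  then have z_eq: "z = linext K unit_chain z" using linext_unit_chain[OF fin] by simp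
  have "bd K (cone v z) = linext K (\<lambda>\<sigma>. bd K (cone v (unit_chain \<sigma>))) z"
    by (subst z_eq) (simp only: cone_linext bd_linext linext_linext)
  moreover have "cone v (bd K z) = linext K (\<lambda>\<sigma>. cone v (incid \<sigma>)) z"
    unfolding bd_linext cone_linext ..
  ultimately have "bd K (cone v z) \<tau> + cone v (bd K z) \<tau> =
      linext K (\<lambda>\<sigma> \<tau>. bd K (cone v (unit_chain \<sigma>)) \<tau> + cone v (incid \<sigma>) \<tau>) z \<tau>"
    unfolding linext_add by simp
  also have "\<dots> = linext K (\<lambda>\<sigma> \<tau>. unit_chain \<sigma> \<tau> - (if card \<sigma> = 1 \<and> \<tau> = {v} then 1 else 0)) z \<tau>"
  proof -
    have "(\<lambda>\<tau>. bd K (cone v (unit_chain \<sigma>)) \<tau> + cone v (incid \<sigma>) \<tau>) =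
        (\<lambda>\<tau>. unit_chain \<sigma> \<tau> - (if card \<sigma> = 1 \<and> \<tau> = {v} then 1 else 0))"
      if "z \<sigma> \<noteq> 0" for \<sigma>
    proof -
      have "\<sigma> \<subseteq> S" "\<sigma> \<noteq> {}" using z[OF that] by auto
      moreover have "insert v \<sigma> \<in> K" using face_in_complex[OF K S] v \<open>\<sigma> \<subseteq> S\<close> by auto
      ultimately show ?thesis
        using cone_identity_unit_chain[OF K _ _ _] finite_subset[OF _ finite_simplex[OF K S]] by auto
    qed
    then have "linext K (\<lambda>\<sigma> \<tau>. bd K (cone v (unit_chain \<sigma>)) \<tau> + cone v (incid \<sigma>) \<tau>) z =
        linext K (\<lambda>\<sigma> \<tau>. unit_chain \<sigma> \<tau> - (if card \<sigma> = 1 \<and> \<tau> = {v} then 1 else 0)) z"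
      by (intro linext_cong)
    then show ?thesis by simp
  qed
  also have "\<dots> = z \<tau> - (if \<tau> = {v} then (\<Sum>\<rho>\<in>K. if card \<rho> = 1 then z \<rho> else 0) else 0)"
    unfolding linext_diff by (subst (2) z_eq) (auto simp: linext_def intro: sum.cong)
  finally show ?thesis .
qed

subsection \<open>Independence of the ordering\<close>

locale two_good_orderings =
  fixes K L :: "'v::linorder set set" and p :: nat and T :: "'v set \<Rightarrow> rat"
    and R1 R2 :: "'v \<Rightarrow> 'v \<Rightarrow> bool"
  assumes K: "simplicial_complex K" and F: "full_subcomplex L K" and ev: "even p"
    and T: "rel_cochain K (Wcomplex K L) p T" and coc: "cocycle K p T"
    and R1: "good_ordering K L R1" and R2: "good_ordering K L R2"
begin

abbreviation "f \<equiv> cap_simplex p R1 T"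
abbreviation "g \<equiv> cap_simplex p R2 T"

text \<open>The chain homotopy between the two cap maps, by acyclic carriers: D \<sigma> is the cone, from
  the least vertex of \<sigma> in L, on the cycle f \<sigma> - g \<sigma> - D (\<partial>\<sigma>), which is carried by the full
  simplex \<sigma> \<inter> L.\<close>

fun homotopy_rec :: "nat \<Rightarrow> 'v set \<Rightarrow> 'v set \<Rightarrow> rat" where
  "homotopy_rec 0 = (\<lambda>\<sigma> \<tau>. 0)"
| "homotopy_rec (Suc n) = (\<lambda>\<sigma>. cone (Min (\<sigma> \<inter> \<Union>L))
     (\<lambda>\<tau>. f \<sigma> \<tau> - g \<sigma> \<tau> - (\<Sum>\<rho>\<in>K. incid \<sigma> \<rho> * homotopy_rec n \<rho> \<tau>)))"

definition D :: "'v set \<Rightarrow> 'v set \<Rightarrow> rat" where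
  "D \<sigma> = homotopy_rec (card \<sigma>) \<sigma>"

definition defect :: "'v set \<Rightarrow> 'v set \<Rightarrow> rat" where
  "defect \<sigma> = (\<lambda>\<tau>. f \<sigma> \<tau> - g \<sigma> \<tau> - linext K D (incid \<sigma>) \<tau>)"

lemma D_eq_cone:
  assumes \<sigma>: "\<sigma> \<in> K" shows "D \<sigma> = cone (Min (\<sigma> \<inter> \<Union>L)) (defect \<sigma>)"
proof -
  have fin: "finite \<sigma>" using finite_simplex[OF K \<sigma>] .
  then obtain n where n: "card \<sigma> = Suc n" using simplex_nonempty[OF K \<sigma>] by (cases "card \<sigma>") auto
  have "(\<Sum>\<rho>\<in>K. incid \<sigma> \<rho> * homotopy_rec n \<rho> \<tau>) = linext K D (incid \<sigma>) \<tau>" for \<tau>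
    unfolding linext_def
  proof (rule sum.cong)
    fix \<rho>
    show "incid \<sigma> \<rho> * homotopy_rec n \<rho> \<tau> = incid \<sigma> \<rho> * D \<rho> \<tau>"
      using card_incid_nonzero[of \<sigma> \<rho>] n by (cases "incid \<sigma> \<rho> = 0") (auto simp: D_def)
  qed simp
  then show ?thesis by (simp add: D_def n defect_def)
qed

text \<open>The invariant proved by induction on the number of vertices; the bound 2 \<le> card \<tau> records
  that D \<sigma> is a cone, and makes D vanish on simplices with at most p vertices.\<close>

definition homotopy_at :: "'v set \<Rightarrow> bool" where
  "homotopy_at \<sigma> \<longleftrightarrow>
     (\<forall>\<tau>. D \<sigma> \<tau> \<noteq> 0 \<longrightarrow> \<tau> \<subseteq> \<sigma> \<inter> \<Union>L \<and> 2 \<le> card \<tau> \<and> card \<tau> + p = Suc (card \<sigma>)) \<and>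
     bd K (D \<sigma>) = defect \<sigma>"

lemma D_vanishes_low_dim:
  assumes "homotopy_at \<rho>" "card \<rho> \<le> p" shows "D \<rho> \<tau> = 0"
  using assms unfolding homotopy_at_def by fastforce

context
  fixes \<sigma> assumes \<sigma>: "\<sigma> \<in> K" and faces: "\<And>\<rho>. \<rho> \<in> K \<Longrightarrow> incid \<sigma> \<rho> \<noteq> 0 \<Longrightarrow> homotopy_at \<rho>"
begin

lemma defect_support:
  assumes "defect \<sigma> \<tau> \<noteq> 0"
  shows "\<tau> \<subseteq> \<sigma> \<inter> \<Union>L \<and> \<tau> \<noteq> {} \<and> card \<tau> + p = card \<sigma>"
proof -
  consider "f \<sigma> \<tau> \<noteq> 0" | "g \<sigma> \<tau> \<noteq> 0" | "linext K D (incid \<sigma>) \<tau> \<noteq> 0"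
    using assms unfolding defect_def by force
  then show ?thesis
  proof cases
    case 1
    then show ?thesis using cap_simplex_support[OF K F R1 T \<sigma>] simplex_nonempty[OF K]
      full_subcomplex_subset[OF F] by blast
  next
    case 2
    then show ?thesis using cap_simplex_support[OF K F R2 T \<sigma>] simplex_nonempty[OF K]
      full_subcomplex_subset[OF F] by blast
  next
    case 3
    then obtain \<rho> where \<rho>: "\<rho> \<in> K" "incid \<sigma> \<rho> \<noteq> 0" "D \<rho> \<tau> \<noteq> 0" by (rule linext_nonzeroE)
    then have "\<tau> \<subseteq> \<rho> \<inter> \<Union>L" "2 \<le> card \<tau>" "card \<tau> + p = Suc (card \<rho>)"
      using faces[OF \<rho>(1,2)] unfolding homotopy_at_def by auto
    then show ?thesis using card_incid_nonzero[OF \<rho>(2)] by auto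
  qed
qed

lemma bd_defect: "bd K (defect \<sigma>) \<tau> = 0"
proof -
  have "bd K (linext K D (incid \<sigma>)) = linext K defect (incid \<sigma>)"
    unfolding bd_linext linext_linext
    by (rule linext_cong) (use faces in \<open>simp add: homotopy_at_def bd_linext\<close>)
  moreover have "linext K (\<lambda>\<rho>. linext K D (incid \<rho>)) (incid \<sigma>) \<tau> = 0"
  proof -
    have "linext K (\<lambda>\<rho>. linext K D (incid \<rho>)) (incid \<sigma>) = linext K D (bd K (incid \<sigma>))"
      unfolding bd_linext linext_linext ..
    then show ?thesis using bd_incid[OF K \<sigma>] by (simp add: linext_def)
  qed
  ultimately have "bd K (linext K D (incid \<sigma>)) \<tau> =
      linext K f (incid \<sigma>) \<tau> - linext K g (incid \<sigma>) \<tau>"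
    unfolding defect_def linext_diff by simp
  moreover have "bd K (f \<sigma>) \<tau> = linext K f (incid \<sigma>) \<tau>" "bd K (g \<sigma>) \<tau> = linext K g (incid \<sigma>) \<tau>"
    using bd_cap_simplex[OF K _ coc ev \<sigma>] good_ordering_ordering[OF R1] good_ordering_ordering[OF R2]
    by (simp_all add: linext_def)
  ultimately show ?thesis by (simp add: defect_def bd_def sum_subtractf left_diff_distrib)
qed

lemma augmentation_defect: "(\<Sum>\<rho>\<in>K. if card \<rho> = 1 then defect \<sigma> \<rho> else 0) = 0"
proof (cases "card \<sigma> = Suc p")
  case False
  have "(if card \<rho> = 1 then defect \<sigma> \<rho> else 0) = 0" for \<rho>
    using defect_support[of \<rho>] False by (cases "defect \<sigma> \<rho> = 0") auto
  then show ?thesis by simp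
next
  case True
  have "linext K D (incid \<sigma>) \<tau> = 0" for \<tau>
  proof (rule ccontr)
    assume "linext K D (incid \<sigma>) \<tau> \<noteq> 0"
    then obtain \<rho> where \<rho>: "\<rho> \<in> K" "incid \<sigma> \<rho> \<noteq> 0" "D \<rho> \<tau> \<noteq> 0" by (rule linext_nonzeroE)
    then show False
      using D_vanishes_low_dim[OF faces[OF \<rho>(1,2)]] card_incid_nonzero[OF \<rho>(2)] True by simp
  qed
  then have "(if card \<rho> = 1 then defect \<sigma> \<rho> else 0) = f \<sigma> \<rho> - g \<sigma> \<rho>" for \<rho>
  proof (cases "card \<rho> = 1")
    case False
    then have "f \<sigma> \<rho> = 0" "g \<sigma> \<rho> = 0"
      using cap_simplex_support[OF K F R1 T \<sigma>, of \<rho>] cap_simplex_support[OF K F R2 T \<sigma>, of \<rho>] True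
      by auto
    with False show ?thesis by simp
  qed (simp add: defect_def)
  then have "(\<Sum>\<rho>\<in>K. if card \<rho> = 1 then defect \<sigma> \<rho> else 0) = (\<Sum>\<rho>\<in>K. f \<sigma> \<rho>) - (\<Sum>\<rho>\<in>K. g \<sigma> \<rho>)"
    by (simp add: sum_subtractf)
  also have "\<dots> = 0"
    using sum_cap_simplex_vertices[OF K _ \<sigma> True] good_ordering_ordering[OF R1]
      good_ordering_ordering[OF R2] by simp
  finally show ?thesis .
qed

lemma homotopy_at_step: "homotopy_at \<sigma>"
proof (cases "\<sigma> \<inter> \<Union>L = {}")
  case True
  then have "defect \<sigma> \<tau> = 0" for \<tau> using defect_support[of \<tau>] by blast
  then have "defect \<sigma> = (\<lambda>_. 0)" by blast
  then show ?thesis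
    unfolding homotopy_at_def D_eq_cone[OF \<sigma>] by (simp add: bd_def)
next
  case False
  define v where "v = Min (\<sigma> \<inter> \<Union>L)"
  have fin: "finite (\<sigma> \<inter> \<Union>L)" using finite_simplex[OF K \<sigma>] by simp
  have v: "v \<in> \<sigma> \<inter> \<Union>L" unfolding v_def using Min_in[OF fin False] .
  have S: "\<sigma> \<inter> \<Union>L \<in> K" using face_in_complex[OF K \<sigma>] False by blast
  have "\<rho> \<subseteq> \<sigma> \<inter> \<Union>L \<and> \<rho> \<noteq> {}" if "defect \<sigma> \<rho> \<noteq> 0" for \<rho>
    using defect_support[OF that] by blast
  then have "bd K (cone v (defect \<sigma>)) \<tau> + cone v (bd K (defect \<sigma>)) \<tau> = defect \<sigma> \<tau>" for \<tau>
    using cone_identity[OF K S v] augmentation_defect by simp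
  moreover have "cone v (bd K (defect \<sigma>)) = (\<lambda>_. 0)"
    using bd_defect by (simp add: fun_eq_iff cone_def)
  ultimately have "bd K (D \<sigma>) = defect \<sigma>" by (simp add: fun_eq_iff D_eq_cone[OF \<sigma>] v_def)
  moreover have "\<tau> \<subseteq> \<sigma> \<inter> \<Union>L \<and> 2 \<le> card \<tau> \<and> card \<tau> + p = Suc (card \<sigma>)" if "D \<sigma> \<tau> \<noteq> 0" for \<tau>
  proof -
    have h: "v \<in> \<tau>" "\<tau> - {v} \<noteq> {}" "defect \<sigma> (\<tau> - {v}) \<noteq> 0"
      using that unfolding D_eq_cone[OF \<sigma>] v_def[symmetric] cone_def by (auto split: if_splits)
    then have "\<tau> - {v} \<subseteq> \<sigma> \<inter> \<Union>L" and card: "card (\<tau> - {v}) + p = card \<sigma>"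
      using defect_support[OF h(3)] by blast+
    then have "\<tau> \<subseteq> \<sigma> \<inter> \<Union>L" using v h(1) by blast
    moreover from this have "finite \<tau>" using fin by (rule finite_subset)
    then have "Suc (card (\<tau> - {v})) = card \<tau>" "0 < card (\<tau> - {v})"
      using card_Suc_Diff1[OF _ h(1)] h(2) by (auto intro: card_gt_0_iff[THEN iffD2])
    ultimately show ?thesis using card by linarith
  qed
  ultimately show ?thesis unfolding homotopy_at_def by blast
qed

end

lemma homotopy_at: "\<sigma> \<in> K \<Longrightarrow> homotopy_at \<sigma>"
proof (induction "card \<sigma>" arbitrary: \<sigma> rule: less_induct)
  case less
  show ?case
  proof (rule homotopy_at_step[OF less.prems])
    fix \<rho> assume "\<rho> \<in> K" "incid \<sigma> \<rho> \<noteq> 0"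
    then show "homotopy_at \<rho>" using less.hyps card_incid_nonzero[of \<sigma> \<rho>] by simp
  qed
qed

lemma D_chain:
  assumes K0: "simplicial_complex K0" "K0 \<subseteq> K" and c: "chain K0 k c"
  shows "chain (K0 \<inter> L) (Suc k - p) (linext K D c)"
  unfolding chain_def
proof (intro allI impI)
  fix \<tau> assume "linext K D c \<tau> \<noteq> 0"
  then obtain \<sigma> where \<sigma>: "\<sigma> \<in> K" "c \<sigma> \<noteq> 0" "D \<sigma> \<tau> \<noteq> 0" by (rule linext_nonzeroE)
  have \<sigma>0: "\<sigma> \<in> K0" "card \<sigma> = Suc k" using c \<sigma>(2) unfolding chain_def by auto
  have \<tau>: "\<tau> \<subseteq> \<sigma> \<inter> \<Union>L" "2 \<le> card \<tau>" "card \<tau> + p = Suc (card \<sigma>)"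
    using homotopy_at[OF \<sigma>(1)] \<sigma>(3) unfolding homotopy_at_def by auto
  then have "\<tau> \<noteq> {}" by auto
  then have "\<tau> \<in> K0" "\<tau> \<in> L"
    using face_in_complex[OF K0(1) \<sigma>0(1)] face_in_complex[OF K \<sigma>(1)] full_subcomplexD[OF F] \<tau>(1)
    by auto
  then show "\<tau> \<in> K0 \<inter> L \<and> card \<tau> = Suc (Suc k - p)" using \<tau>(2,3) \<sigma>0(2) by auto
qed

lemma chain_homotopy:
  "linext K f c \<tau> - linext K g c \<tau> = bd K (linext K D c) \<tau> + linext K D (bd K c) \<tau>"
proof -
  have "bd K (linext K D c) \<tau> + linext K D (bd K c) \<tau> =
      linext K (\<lambda>\<sigma> \<tau>. bd K (D \<sigma>) \<tau> + linext K D (incid \<sigma>) \<tau>) c \<tau>"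
    unfolding linext_add bd_linext linext_linext ..
  also have "\<dots> = linext K (\<lambda>\<sigma> \<tau>. f \<sigma> \<tau> - g \<sigma> \<tau>) c \<tau>"
    using homotopy_at by (intro fun_cong[OF linext_cong]) (simp add: homotopy_at_def defect_def)
  finally show ?thesis by (simp add: linext_diff)
qed

end

subsection \<open>The induced map on relative homology\<close>

lemma cap_rel_cycle:
  assumes K: "simplicial_complex K" and F: "full_subcomplex L K" and p: "0 < p" "even p"
    and T: "rel_cochain K (Wcomplex K L) p T" "cocycle K p T" and Ks: "subcomplex Ks K"
    and R: "good_ordering K L R" and c: "rel_cycle K Ks (p + q) c"
  shows "rel_cycle L (Ks \<inter> L) q (cap K p R T c)"
proof -
  have Ks': "simplicial_complex Ks" "Ks \<subseteq> K" using Ks unfolding subcomplex_def by auto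
  have LK: "L \<subseteq> K" using full_subcomplex_subset[OF F] .
  have c1: "chain K (p + q) c" and c2: "chain Ks (p + q - 1) (bd K c)"
    using c unfolding rel_cycle_def by auto
  have chain: "chain L q (cap K p R T c)"
    using cap_chain[OF K F R T(1) K order_refl c1] LK by (simp add: Int_absorb1)
  then have "bd L (cap K p R T c) = cap K p R T (bd K c)"
    using bd_subcomplex[OF finite_complex[OF K] LK] cap_chain_map[OF K good_ordering_ordering[OF R] T(2) p(2)]
    unfolding chain_def by auto
  moreover have "chain (Ks \<inter> L) (q - 1) (cap K p R T (bd K c))"
    using cap_chain[OF K F R T(1) Ks' c2] p(1) by (simp add: diff_diff_left)
  ultimately show ?thesis using chain unfolding rel_cycle_def by simp
qed

lemma cap_rel_boundary:
  assumes K: "simplicial_complex K" and F: "full_subcomplex L K" and p: "even p"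
    and T: "rel_cochain K (Wcomplex K L) p T" "cocycle K p T" and Ks: "subcomplex Ks K"
    and R: "good_ordering K L R" and c: "rel_boundary K Ks (p + q) c"
  shows "rel_boundary L (Ks \<inter> L) q (cap K p R T c)"
proof -
  have Ks': "simplicial_complex Ks" "Ks \<subseteq> K" using Ks unfolding subcomplex_def by auto
  have LK: "L \<subseteq> K" using full_subcomplex_subset[OF F] .
  obtain d e where d: "chain K (Suc (p + q)) d" and e: "chain Ks (p + q) e"
    and c_eq: "c = (\<lambda>\<tau>. bd K d \<tau> + e \<tau>)"
    using c unfolding rel_boundary_def by blast
  have d': "chain L (Suc q) (cap K p R T d)"
    using cap_chain[OF K F R T(1) K order_refl d] LK by (simp add: Int_absorb1 Suc_diff_le)
  have "cap K p R T c = (\<lambda>\<tau>. cap K p R T (bd K d) \<tau> + cap K p R T e \<tau>)"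
    unfolding c_eq cap_linext by (simp add: fun_eq_iff linext_add_chain)
  also have "cap K p R T (bd K d) = bd L (cap K p R T d)"
    using bd_subcomplex[OF finite_complex[OF K] LK] cap_chain_map[OF K good_ordering_ordering[OF R] T(2) p]
      d' unfolding chain_def by auto
  finally show ?thesis
    using d' cap_chain[OF K F R T(1) Ks' e] unfolding rel_boundary_def by auto
qed

lemma cap_ordering_independent:
  assumes K: "simplicial_complex K" and F: "full_subcomplex L K" and p: "0 < p" "even p"
    and T: "rel_cochain K (Wcomplex K L) p T" "cocycle K p T" and Ks: "subcomplex Ks K"
    and R: "good_ordering K L R1" "good_ordering K L R2" and c: "rel_cycle K Ks (p + q) c"
  shows "rel_boundary L (Ks \<inter> L) q (\<lambda>\<tau>. cap K p R1 T c \<tau> - cap K p R2 T c \<tau>)"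
proof -
  interpret two_good_orderings K L p T R1 R2
    using assms by unfold_locales
  have Ks': "simplicial_complex Ks" "Ks \<subseteq> K" using Ks unfolding subcomplex_def by auto
  have LK: "L \<subseteq> K" using full_subcomplex_subset[OF F] .
  have c1: "chain K (p + q) c" and c2: "chain Ks (p + q - 1) (bd K c)"
    using c unfolding rel_cycle_def by auto
  have d: "chain L (Suc q) (linext K D c)"
    using D_chain[OF K order_refl c1] LK by (simp add: Int_absorb1 Suc_diff_le)
  moreover have "chain (Ks \<inter> L) q (linext K D (bd K c))"
    using D_chain[OF Ks' c2] p(1) by simp
  moreover have "bd L (linext K D c) = bd K (linext K D c)"
    using bd_subcomplex[OF finite_complex[OF K] LK] d unfolding chain_def by auto
  ultimately show ?thesis
    unfolding rel_boundary_def cap_linext chain_homotopy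
    by (intro exI[of _ "linext K D c"] exI[of _ "linext K D (bd K c)"]) simp
qed

theorem propositionB2:
  fixes K L Ks :: "'v::linorder set set" and T :: "'v set \<Rightarrow> rat" and p :: nat
  assumes "simplicial_complex K"
    and "full_subcomplex L K"
    and "p > 0" and "even p"
    and "rel_cochain K (Wcomplex K L) p T" and "cocycle K p T"
    and "subcomplex Ks K"
  shows "(\<forall>R q c. good_ordering K L R \<and> rel_cycle K Ks (p + q) c \<longrightarrow>
             rel_cycle L (Ks \<inter> L) q (cap K p R T c))
       \<and> (\<forall>R q c. good_ordering K L R \<and> rel_boundary K Ks (p + q) c \<longrightarrow>
             rel_boundary L (Ks \<inter> L) q (cap K p R T c))
       \<and> (\<forall>R1 R2 q c. good_ordering K L R1 \<and> good_ordering K L R2 \<and> rel_cycle K Ks (p + q) c \<longrightarrow>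
             rel_boundary L (Ks \<inter> L) q (\<lambda>\<tau>. cap K p R1 T c \<tau> - cap K p R2 T c \<tau>))"
  using cap_rel_cycle[OF assms(1-7)] cap_rel_boundary[OF assms(1,2,4-7)]
    cap_ordering_independent[OF assms(1-7)]
  by blast

end
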